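(* Let $I\subset S$ be a proper nonzero monomial complete intersection ideal, i.e. its minimal monomial generators form a regular sequence. Then $I$ is $0$-clean.
   Context: $S=K[x_1,\dots,x_n]$, $K$ a field. For a monomial $u=x_1^{a_1}\cdots x_n^{a_n}$, $\mathrm{supp}(u)=\{i:a_i>0\}$. For an ideal $I$, $\min(I)$ is the set of minimal primes of $I$. A monomial $u\neq 1$ with $u\notin I$ is a cleaner monomial of $I$ if $\min(I+Su)\subseteq\min(I)$. For $k\ge 0$, the class of $k$-clean monomial ideals is defined recursively (smallest class closed under the rule): a proper monomial ideal $I$ is $k$-clean if either $I$ is prime, or $I$ has no embedded primes and there is a cleaner monomial $u$ of $I$ with $|\mathrm{supp}(u)|\le k+1$ such that $I:u$ and $I+Su$ are $k$-clean. *)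

theory Defs
  imports "HOL-Library.Poly_Mapping"
begin

(* Polynomial ring S = K[x_i : i in 'n] is modelled as finitely supported maps
   from exponent vectors to coefficients, 'n a finite type of variables, 'k a field. *)

type_synonym ('n, 'k) mpoly = "('n \<Rightarrow>\<^sub>0 nat) \<Rightarrow>\<^sub>0 'k"

definition is_ideal :: "'a::comm_ring_1 set \<Rightarrow> bool" where
  "is_ideal I \<longleftrightarrow> 0 \<in> I \<and> (\<forall>a\<in>I. \<forall>b\<in>I. a + b \<in> I) \<and> (\<forall>r. \<forall>a\<in>I. r * a \<in> I)"

definition gen_ideal :: "'a::comm_ring_1 set \<Rightarrow> 'a set" where
  "gen_ideal G = \<Inter>{J. is_ideal J \<and> G \<subseteq> J}"

definition ideal_sum :: "'a::comm_ring_1 set \<Rightarrow> 'a set \<Rightarrow> 'a set" where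
  "ideal_sum I J = {a + b | a b. a \<in> I \<and> b \<in> J}"

definition principal :: "'a::comm_ring_1 \<Rightarrow> 'a set" where
  "principal u = {s * u | s. True}"

definition colon :: "'a::comm_ring_1 set \<Rightarrow> 'a \<Rightarrow> 'a set" where
  "colon I u = {f. f * u \<in> I}"

definition prime_ideal :: "'a::comm_ring_1 set \<Rightarrow> bool" where
  "prime_ideal P \<longleftrightarrow> is_ideal P \<and> P \<noteq> UNIV \<and> (\<forall>a b. a * b \<in> P \<longrightarrow> a \<in> P \<or> b \<in> P)"

definition min_primes :: "'a::comm_ring_1 set \<Rightarrow> 'a set set" where
  "min_primes I = {P. prime_ideal P \<and> I \<subseteq> P \<and> (\<forall>Q. prime_ideal Q \<and> I \<subseteq> Q \<and> Q \<subseteq> P \<longrightarrow> Q = P)}"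

definition ass_primes :: "'a::comm_ring_1 set \<Rightarrow> 'a set set" where
  "ass_primes I = {P. prime_ideal P \<and> (\<exists>f. P = colon I f)}"

definition no_embedded_primes :: "'a::comm_ring_1 set \<Rightarrow> bool" where
  "no_embedded_primes I \<longleftrightarrow> ass_primes I \<subseteq> min_primes I"

definition regular_sequence :: "'a::comm_ring_1 list \<Rightarrow> bool" where
  "regular_sequence fs \<longleftrightarrow> gen_ideal (set fs) \<noteq> UNIV \<and>
     (\<forall>i < length fs. \<forall>g. g * fs ! i \<in> gen_ideal (set (take i fs))
        \<longrightarrow> g \<in> gen_ideal (set (take i fs)))"

definition monomials :: "('n, 'k::field) mpoly set" where
  "monomials = range (\<lambda>a. Poly_Mapping.single a 1)"

definition mon_supp :: "('n, 'k::field) mpoly \<Rightarrow> 'n set" where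
  "mon_supp u = (\<Union>a \<in> Poly_Mapping.keys u. Poly_Mapping.keys a)"

definition monomial_ideal :: "('n, 'k::field) mpoly set \<Rightarrow> bool" where
  "monomial_ideal I \<longleftrightarrow> (\<exists>G \<subseteq> monomials. I = gen_ideal G)"

definition min_mon_gens :: "('n, 'k::field) mpoly set \<Rightarrow> ('n, 'k) mpoly set" where
  "min_mon_gens I = {u \<in> I \<inter> monomials. \<forall>v \<in> I \<inter> monomials. v dvd u \<longrightarrow> v = u}"

definition complete_intersection :: "('n, 'k::field) mpoly set \<Rightarrow> bool" where
  "complete_intersection I \<longleftrightarrow>
     (\<exists>fs. distinct fs \<and> set fs = min_mon_gens I \<and> regular_sequence fs)"

definition cleaner_monomial :: "('n, 'k::field) mpoly set \<Rightarrow> ('n, 'k) mpoly \<Rightarrow> bool" where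
  "cleaner_monomial I u \<longleftrightarrow> u \<in> monomials \<and> u \<noteq> 1 \<and> u \<notin> I \<and>
     min_primes (ideal_sum I (principal u)) \<subseteq> min_primes I"

inductive k_clean :: "nat \<Rightarrow> ('n, 'k::field) mpoly set \<Rightarrow> bool" for k where
  prime: "monomial_ideal I \<Longrightarrow> I \<noteq> UNIV \<Longrightarrow> prime_ideal I \<Longrightarrow> k_clean k I"
| step: "monomial_ideal I \<Longrightarrow> I \<noteq> UNIV \<Longrightarrow> no_embedded_primes I \<Longrightarrow>
         cleaner_monomial I u \<Longrightarrow> card (mon_supp u) \<le> k + 1 \<Longrightarrow>
         k_clean k (colon I u) \<Longrightarrow> k_clean k (ideal_sum I (principal u)) \<Longrightarrow> k_clean k I"

end

theory Submission
  imports Defs "HOL-Library.Countable" "HOL-Library.Disjoint_Sets"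
begin

text \<open>
  If the minimal monomial generators of \<open>I\<close> form a regular sequence, their supports are
  pairwise disjoint: a shared variable would make the later generator a zero divisor modulo the
  earlier ones. For \<open>I = (x\<^sup>a\<^sub>1, \<dots>, x\<^sup>a\<^sub>r)\<close> with disjoint supports, the minimal primes are the
  ideals generated by one variable from each support, and every associated prime \<open>I : f\<close>
  is of this form, so \<open>I\<close> has no embedded primes. If some generator \<open>x\<^sup>a\<close> is not a
  variable, pick a variable \<open>x\<^sub>i\<close> dividing it: then \<open>I + (x\<^sub>i)\<close> and \<open>I : x\<^sub>i\<close> arise by
  replacing \<open>x\<^sup>a\<close> by \<open>x\<^sub>i\<close> and by \<open>x\<^sup>a / x\<^sub>i\<close>, so they again have disjoint supports and smaller
  total degree, and every minimal prime of \<open>I + (x\<^sub>i)\<close> is one of \<open>I\<close>. Induction on the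
  total degree ends with ideals generated by variables, which are prime.
\<close>

section \<open>Keys of products\<close>

lemma poly_mapping_sum_single:
  "(f :: 'a \<Rightarrow>\<^sub>0 'b::comm_monoid_add) =
     (\<Sum>a\<in>Poly_Mapping.keys f. Poly_Mapping.single a (Poly_Mapping.lookup f a))"
  by (rule poly_mapping_eqI) (simp add: lookup_sum lookup_single when_def in_keys_iff)

lemma lookup_mult_keys:
  fixes f g :: "'a::comm_monoid_add \<Rightarrow>\<^sub>0 'b::comm_semiring_0"
  shows "Poly_Mapping.lookup (f * g) k =
    (\<Sum>a\<in>Poly_Mapping.keys f. \<Sum>b\<in>Poly_Mapping.keys g.
       if a + b = k then Poly_Mapping.lookup f a * Poly_Mapping.lookup g b else 0)"
proof -
  have "f * g = (\<Sum>a\<in>Poly_Mapping.keys f. \<Sum>b\<in>Poly_Mapping.keys g.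
      Poly_Mapping.single (a + b) (Poly_Mapping.lookup f a * Poly_Mapping.lookup g b))"
    by (subst (1 2) poly_mapping_sum_single) (simp add: sum_product mult_single)
  then show ?thesis
    by (simp add: lookup_sum lookup_single when_def)
qed

text \<open>The keys of f and g that are largest under the embedding add up to a key of f * g
  that arises in only one way, so its coefficient is a product of two nonzero coefficients.\<close>
lemma keys_mult_witness_embedding:
  fixes f g :: "'a::comm_monoid_add \<Rightarrow>\<^sub>0 'b::{comm_semiring_0,semiring_no_zero_divisors}"
    and \<phi> :: "'a \<Rightarrow> 'c::linordered_cancel_ab_semigroup_add"
  assumes "inj \<phi>" and \<phi>_add: "\<And>x y. \<phi> (x + y) = \<phi> x + \<phi> y"
    and "f \<noteq> 0" "g \<noteq> 0"
  shows "\<exists>a\<in>Poly_Mapping.keys f. \<exists>b\<in>Poly_Mapping.keys g. a + b \<in> Poly_Mapping.keys (f * g)"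
proof -
  have ex_max: "\<exists>x\<in>Poly_Mapping.keys h. \<forall>y\<in>Poly_Mapping.keys h. \<phi> y \<le> \<phi> x" if "h \<noteq> 0" for h
    :: "'a \<Rightarrow>\<^sub>0 'b"
  proof -
    have "Max (\<phi> ` Poly_Mapping.keys h) \<in> \<phi> ` Poly_Mapping.keys h"
      using that by (intro Max_in) auto
    then obtain x where x: "x \<in> Poly_Mapping.keys h" "\<phi> x = Max (\<phi> ` Poly_Mapping.keys h)"
      by auto
    then have "\<phi> y \<le> \<phi> x" if "y \<in> Poly_Mapping.keys h" for y
      using that by simp
    with x(1) show ?thesis by blast
  qed
  obtain a0 where a0: "a0 \<in> Poly_Mapping.keys f" and max_a0: "\<And>a. a \<in> Poly_Mapping.keys f \<Longrightarrow> \<phi> a \<le> \<phi> a0"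
    using ex_max[OF \<open>f \<noteq> 0\<close>] by blast
  obtain b0 where b0: "b0 \<in> Poly_Mapping.keys g" and max_b0: "\<And>b. b \<in> Poly_Mapping.keys g \<Longrightarrow> \<phi> b \<le> \<phi> b0"
    using ex_max[OF \<open>g \<noteq> 0\<close>] by blast
  have unique: "a = a0 \<and> b = b0"
    if "a \<in> Poly_Mapping.keys f" "b \<in> Poly_Mapping.keys g" "a + b = a0 + b0" for a b
  proof -
    have sum_eq: "\<phi> a + \<phi> b = \<phi> a0 + \<phi> b0"
      using that(3) \<phi>_add by metis
    have "\<phi> a = \<phi> a0"
    proof (rule ccontr)
      assume "\<phi> a \<noteq> \<phi> a0"
      then have "\<phi> a + \<phi> b < \<phi> a0 + \<phi> b0"
        using max_a0[OF that(1)] max_b0[OF that(2)] by (simp add: add_less_le_mono)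
      then show False using sum_eq by simp
    qed
    with sum_eq have "\<phi> b = \<phi> b0" by simp
    with \<open>\<phi> a = \<phi> a0\<close> show ?thesis using \<open>inj \<phi>\<close> by (auto dest: injD)
  qed
  have "Poly_Mapping.lookup (f * g) (a0 + b0) =
      (\<Sum>a\<in>Poly_Mapping.keys f. \<Sum>b\<in>Poly_Mapping.keys g.
         if a = a0 \<and> b = b0 then Poly_Mapping.lookup f a * Poly_Mapping.lookup g b else 0)"
    unfolding lookup_mult_keys by (intro sum.cong refl) (auto dest: unique)
  also have "\<dots> = (\<Sum>a\<in>Poly_Mapping.keys f. if a = a0 then Poly_Mapping.lookup f a0 * Poly_Mapping.lookup g b0 else 0)"
    using b0 by (intro sum.cong refl) (simp add: sum.delta' conj_commute[of "_ = a0"] if_distrib)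
  also have "\<dots> = Poly_Mapping.lookup f a0 * Poly_Mapping.lookup g b0"
    using a0 by (simp add: sum.delta')
  also have "\<dots> \<noteq> 0"
    using a0 b0 by (simp add: in_keys_iff)
  finally have "a0 + b0 \<in> Poly_Mapping.keys (f * g)"
    by (simp add: in_keys_iff)
  with a0 b0 show ?thesis by blast
qed

text \<open>Relabelling the variables by \<open>to_nat\<close> embeds the exponent monoid into
  \<open>nat \<Rightarrow>\<^sub>0 nat\<close>, which the library orders linearly and compatibly with addition.\<close>
lemma keys_mult_witness:
  fixes f g :: "('n::countable \<Rightarrow>\<^sub>0 nat) \<Rightarrow>\<^sub>0 'k::{comm_semiring_0,semiring_no_zero_divisors}"
  assumes "f \<noteq> 0" "g \<noteq> 0"
  shows "\<exists>a\<in>Poly_Mapping.keys f. \<exists>b\<in>Poly_Mapping.keys g. a + b \<in> Poly_Mapping.keys (f * g)"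
proof -
  define \<phi> :: "('n \<Rightarrow>\<^sub>0 nat) \<Rightarrow> nat \<Rightarrow>\<^sub>0 nat" where
    "\<phi> b = Abs_poly_mapping (\<lambda>k. Poly_Mapping.lookup b (from_nat k) when k \<in> range (to_nat :: 'n \<Rightarrow> nat))" for b
  have lookup_\<phi>: "Poly_Mapping.lookup (\<phi> b) k = (Poly_Mapping.lookup b (from_nat k) when k \<in> range (to_nat :: 'n \<Rightarrow> nat))"
    for b k
  proof -
    have "{k. (Poly_Mapping.lookup b (from_nat k) when k \<in> range (to_nat :: 'n \<Rightarrow> nat)) \<noteq> 0} \<subseteq> to_nat ` Poly_Mapping.keys b"
      by (auto simp: when_def in_keys_iff from_nat_to_nat)
    then show ?thesis
      unfolding \<phi>_def by (subst Abs_poly_mapping_inverse) (auto intro: finite_subset)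
  qed
  have "inj \<phi>"
  proof (rule injI)
    fix b c assume "\<phi> b = \<phi> c"
    then have "Poly_Mapping.lookup (\<phi> b) (to_nat i) = Poly_Mapping.lookup (\<phi> c) (to_nat i)" for i :: 'n
      by simp
    then show "b = c"
      by (intro poly_mapping_eqI) (simp add: lookup_\<phi>)
  qed
  moreover have "\<phi> (b + c) = \<phi> b + \<phi> c" for b c
    by (rule poly_mapping_eqI) (simp add: lookup_\<phi> lookup_add when_def)
  ultimately show ?thesis
    using keys_mult_witness_embedding assms by blast
qed

section \<open>Ideals\<close>

lemma is_ideal_add: "is_ideal I \<Longrightarrow> a \<in> I \<Longrightarrow> b \<in> I \<Longrightarrow> a + b \<in> I"
  unfolding is_ideal_def by blast

lemma is_ideal_mult_left: "is_ideal I \<Longrightarrow> a \<in> I \<Longrightarrow> r * a \<in> I"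
  unfolding is_ideal_def by blast

lemma is_ideal_mult_right: "is_ideal I \<Longrightarrow> a \<in> I \<Longrightarrow> a * r \<in> I"
  using is_ideal_mult_left[of I a r] by (simp add: mult.commute)

lemma is_ideal_diff: "is_ideal I \<Longrightarrow> a \<in> I \<Longrightarrow> b \<in> I \<Longrightarrow> a - b \<in> I"
  using is_ideal_add[of I a "(- 1) * b"] is_ideal_mult_left[of I b "- 1"] by simp

lemma is_ideal_sum: "is_ideal I \<Longrightarrow> (\<And>x. x \<in> X \<Longrightarrow> f x \<in> I) \<Longrightarrow> sum f X \<in> I"
  by (induction X rule: infinite_finite_induct) (auto simp: is_ideal_def)

lemma is_ideal_one_iff: "is_ideal I \<Longrightarrow> 1 \<in> I \<longleftrightarrow> I = UNIV"
  using is_ideal_mult_left[of I 1] by auto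

lemma prime_ideal_imp_is_ideal: "prime_ideal P \<Longrightarrow> is_ideal P"
  by (simp add: prime_ideal_def)

lemma is_ideal_gen_ideal: "is_ideal (gen_ideal G)"
  unfolding gen_ideal_def is_ideal_def by blast

lemma gen_ideal_superset: "G \<subseteq> gen_ideal G"
  unfolding gen_ideal_def by blast

lemma gen_ideal_least: "is_ideal J \<Longrightarrow> G \<subseteq> J \<Longrightarrow> gen_ideal G \<subseteq> J"
  unfolding gen_ideal_def by blast

lemma is_ideal_principal: "is_ideal (principal u)"
  unfolding is_ideal_def principal_def
proof (intro conjI ballI allI)
  show "0 \<in> {s * u |s. True}"
    by (metis (mono_tags) mem_Collect_eq mult_zero_left)
  fix x y assume "x \<in> {s * u |s. True}" "y \<in> {s * u |s. True}"
  then obtain s t where "x = s * u" "y = t * u"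
    by blast
  then have "x + y = (s + t) * u"
    by (simp add: distrib_right)
  then show "x + y \<in> {s * u |s. True}"
    by blast
next
  fix r x assume "x \<in> {s * u |s. True}"
  then obtain s where "x = s * u"
    by blast
  then have "r * x = (r * s) * u"
    by simp
  then show "r * x \<in> {s * u |s. True}"
    by blast
qed

lemma is_ideal_ideal_sum:
  assumes I: "is_ideal I" and J: "is_ideal J"
  shows "is_ideal (ideal_sum I J)"
  unfolding is_ideal_def ideal_sum_def
proof (intro conjI ballI allI)
  show "0 \<in> {a + b |a b. a \<in> I \<and> b \<in> J}"
    using I J unfolding is_ideal_def by force
  fix x y assume "x \<in> {a + b |a b. a \<in> I \<and> b \<in> J}" "y \<in> {a + b |a b. a \<in> I \<and> b \<in> J}"
  then obtain a b c d where "x = a + b" "y = c + d" "a \<in> I" "b \<in> J" "c \<in> I" "d \<in> J"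
    by blast
  moreover from this have "x + y = (a + c) + (b + d)"
    by (simp add: algebra_simps)
  ultimately show "x + y \<in> {a + b |a b. a \<in> I \<and> b \<in> J}"
    using is_ideal_add[OF I] is_ideal_add[OF J] by blast
next
  fix r x assume "x \<in> {a + b |a b. a \<in> I \<and> b \<in> J}"
  then obtain a b where "x = a + b" "a \<in> I" "b \<in> J"
    by blast
  moreover from this have "r * x = r * a + r * b"
    by (simp add: distrib_left)
  ultimately show "r * x \<in> {a + b |a b. a \<in> I \<and> b \<in> J}"
    using is_ideal_mult_left[OF I] is_ideal_mult_left[OF J] by blast
qed

lemma ideal_sum_gen_ideal_principal: "ideal_sum (gen_ideal G) (principal u) = gen_ideal (insert u G)"
proof
  have "u \<in> gen_ideal (insert u G)" and "gen_ideal G \<subseteq> gen_ideal (insert u G)"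
    using gen_ideal_superset[of "insert u G"] gen_ideal_least[OF is_ideal_gen_ideal] by blast+
  then show "ideal_sum (gen_ideal G) (principal u) \<subseteq> gen_ideal (insert u G)"
    unfolding ideal_sum_def principal_def
    using is_ideal_add[OF is_ideal_gen_ideal] is_ideal_mult_left[OF is_ideal_gen_ideal] by blast
next
  have "0 \<in> gen_ideal G" and "G \<subseteq> gen_ideal G"
    using is_ideal_gen_ideal[of G] gen_ideal_superset[of G] by (auto simp: is_ideal_def)
  moreover have "u = 0 + 1 * u" and "x = x + 0 * u" for x
    by simp_all
  ultimately have "insert u G \<subseteq> ideal_sum (gen_ideal G) (principal u)"
    unfolding ideal_sum_def principal_def by blast
  then show "gen_ideal (insert u G) \<subseteq> ideal_sum (gen_ideal G) (principal u)"
    by (rule gen_ideal_least[OF is_ideal_ideal_sum[OF is_ideal_gen_ideal is_ideal_principal]])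
qed

lemma colon_add_member:
  assumes "is_ideal I" and "h \<in> I"
  shows "colon I (f + h) = colon I f"
proof -
  have "g * (f + h) \<in> I \<longleftrightarrow> g * f \<in> I" for g
  proof -
    have "g * h \<in> I" and "g * (f + h) = g * f + g * h"
      using is_ideal_mult_left[OF assms] by (simp_all add: distrib_left)
    then show ?thesis
      using is_ideal_add[OF assms(1)] is_ideal_diff[OF assms(1)] by (metis add_diff_cancel)
  qed
  then show ?thesis
    unfolding colon_def by blast
qed

section \<open>Monomial ideals as sets of exponents\<close>

definition restrict_keys :: "'a set \<Rightarrow> ('a \<Rightarrow>\<^sub>0 'b::zero) \<Rightarrow> 'a \<Rightarrow>\<^sub>0 'b" where
  "restrict_keys D f = Abs_poly_mapping (\<lambda>b. Poly_Mapping.lookup f b when b \<in> D)"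

lemma lookup_restrict_keys:
  "Poly_Mapping.lookup (restrict_keys D f) b = (Poly_Mapping.lookup f b when b \<in> D)"
proof -
  have "{b. (Poly_Mapping.lookup f b when b \<in> D) \<noteq> 0} \<subseteq> Poly_Mapping.keys f"
    by (auto simp: in_keys_iff)
  then show ?thesis
    unfolding restrict_keys_def by (subst Abs_poly_mapping_inverse) (auto intro: finite_subset)
qed

lemma keys_restrict_keys: "Poly_Mapping.keys (restrict_keys D f) = Poly_Mapping.keys f \<inter> D"
  by (auto simp: in_keys_iff lookup_restrict_keys)

lemma restrict_keys_add_compl: "restrict_keys D f + restrict_keys (- D) f = f"
  by (rule poly_mapping_eqI) (simp add: lookup_add lookup_restrict_keys when_def)

definition supported_in :: "'a set \<Rightarrow> ('a \<Rightarrow>\<^sub>0 'b::zero) set" where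
  "supported_in D = {f. Poly_Mapping.keys f \<subseteq> D}"

lemma restrict_keys_in_supported_in: "restrict_keys D f \<in> supported_in D"
  by (simp add: supported_in_def keys_restrict_keys)

lemma is_ideal_supported_in:
  assumes "\<And>b c. b \<in> D \<Longrightarrow> c + b \<in> D"
  shows "is_ideal (supported_in D :: ('a::comm_monoid_add \<Rightarrow>\<^sub>0 'b::comm_ring_1) set)"
  unfolding is_ideal_def supported_in_def
proof (intro conjI ballI allI)
  fix f g :: "'a \<Rightarrow>\<^sub>0 'b"
  assume "f \<in> {f. Poly_Mapping.keys f \<subseteq> D}" "g \<in> {f. Poly_Mapping.keys f \<subseteq> D}"
  then show "f + g \<in> {f. Poly_Mapping.keys f \<subseteq> D}"
    using keys_add[of f g] by auto
next
  fix r f :: "'a \<Rightarrow>\<^sub>0 'b"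
  assume "f \<in> {f. Poly_Mapping.keys f \<subseteq> D}"
  then show "r * f \<in> {f. Poly_Mapping.keys f \<subseteq> D}"
    using keys_mult[of r f] assms by blast
qed simp

definition monom :: "('n \<Rightarrow>\<^sub>0 nat) \<Rightarrow> ('n, 'k::comm_semiring_1) mpoly" where
  "monom a = Poly_Mapping.single a 1"

definition unit_vec :: "'n \<Rightarrow> 'n \<Rightarrow>\<^sub>0 nat" where
  "unit_vec i = Poly_Mapping.single i 1"

lemma keys_monom [simp]: "Poly_Mapping.keys (monom a) = {a}"
  by (simp add: monom_def)

lemma monom_mult: "monom a * monom b = monom (a + b)"
  by (simp add: monom_def mult_single)

lemma monom_zero: "monom 0 = 1"
  by (simp add: monom_def)

lemma monom_eq_iff: "monom a = monom b \<longleftrightarrow> a = b"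
  by (metis keys_monom singleton_inject)

lemma monom_in_supported_in [simp]: "monom a \<in> supported_in D \<longleftrightarrow> a \<in> D"
  by (simp add: supported_in_def)

lemma keys_mult_monom: "Poly_Mapping.keys (f * monom c) = (\<lambda>b. b + c) ` Poly_Mapping.keys f"
proof -
  have "Poly_Mapping.lookup (f * monom c) (b + c) = Poly_Mapping.lookup f b" for b
  proof -
    have "Poly_Mapping.lookup (f * monom c) (b + c) =
        (\<Sum>a\<in>Poly_Mapping.keys f. if a = b then Poly_Mapping.lookup f a else 0)"
      unfolding lookup_mult_keys by (intro sum.cong) (auto simp: monom_def)
    then show ?thesis
      by (simp add: in_keys_iff)
  qed
  then show ?thesis
    using keys_mult[of f "monom c"] by (force simp: in_keys_iff)
qed

lemma keys_unit_vec [simp]: "Poly_Mapping.keys (unit_vec i) = {i}"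
  by (simp add: unit_vec_def)

lemma unit_vec_neq_zero [simp]: "unit_vec i \<noteq> 0"
  using keys_unit_vec[of i] by (auto simp del: keys_unit_vec)

lemma lookup_unit_vec: "Poly_Mapping.lookup (unit_vec i) j = (if i = j then 1 else 0)"
  by (simp add: unit_vec_def lookup_single)

lemma unit_vec_le_iff: "Poly_Mapping.lookup (unit_vec i) \<le> Poly_Mapping.lookup b \<longleftrightarrow> i \<in> Poly_Mapping.keys b"
  by (auto simp: le_fun_def lookup_unit_vec in_keys_iff)

lemma le_lookup_imp_diff_add:
  "Poly_Mapping.lookup a \<le> Poly_Mapping.lookup b \<Longrightarrow> (b - a) + a = (b :: 'n \<Rightarrow>\<^sub>0 nat)"
  by (rule poly_mapping_eqI) (simp add: le_fun_def lookup_add lookup_minus)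

definition upset :: "('n \<Rightarrow>\<^sub>0 nat) set \<Rightarrow> ('n \<Rightarrow>\<^sub>0 nat) set" where
  "upset A = {b. \<exists>a\<in>A. Poly_Mapping.lookup a \<le> Poly_Mapping.lookup b}"

text \<open>A monomial ideal is represented by exponents: \<open>exp_ideal A\<close> is the ideal generated by
  the monomials \<open>x\<^sup>a\<close>, \<open>a \<in> A\<close> (see \<open>gen_ideal_monom_image\<close>).\<close>
definition exp_ideal :: "('n \<Rightarrow>\<^sub>0 nat) set \<Rightarrow> ('n, 'k::comm_semiring_1) mpoly set" where
  "exp_ideal A = supported_in (upset A)"

lemma subset_upset: "A \<subseteq> upset A"
  by (auto simp: upset_def)

lemma upset_add: "b \<in> upset A \<Longrightarrow> c + b \<in> upset A"
  unfolding upset_def le_fun_def by (force simp: lookup_add intro: trans_le_add2)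

lemma is_ideal_exp_ideal: "is_ideal (exp_ideal A :: ('n, 'k::comm_ring_1) mpoly set)"
  unfolding exp_ideal_def by (rule is_ideal_supported_in[OF upset_add])

lemma monom_in_exp_ideal_iff: "monom b \<in> exp_ideal A \<longleftrightarrow> b \<in> upset A"
  by (simp add: exp_ideal_def)

lemma monom_in_exp_ideal: "a \<in> A \<Longrightarrow> monom a \<in> exp_ideal A"
  using subset_upset[of A] by (auto simp: monom_in_exp_ideal_iff)

lemma gen_ideal_monom_image: "gen_ideal (monom ` A) = (exp_ideal A :: ('n, 'k::comm_ring_1) mpoly set)"
proof
  show "gen_ideal (monom ` A) \<subseteq> (exp_ideal A :: ('n, 'k) mpoly set)"
    using subset_upset[of A] by (intro gen_ideal_least is_ideal_exp_ideal) (auto simp: monom_in_exp_ideal_iff)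
next
  show "(exp_ideal A :: ('n, 'k) mpoly set) \<subseteq> gen_ideal (monom ` A)"
  proof
    fix f :: "('n, 'k) mpoly"
    assume f: "f \<in> exp_ideal A"
    have "Poly_Mapping.single b (Poly_Mapping.lookup f b) \<in> gen_ideal (monom ` A)"
      if b: "b \<in> Poly_Mapping.keys f" for b
    proof -
      obtain a where "a \<in> A" and le: "Poly_Mapping.lookup a \<le> Poly_Mapping.lookup b"
        using f b by (auto simp: exp_ideal_def supported_in_def upset_def)
      have "Poly_Mapping.single b (Poly_Mapping.lookup f b) =
          Poly_Mapping.single (b - a) (Poly_Mapping.lookup f b) * monom a"
        by (simp add: monom_def mult_single le_lookup_imp_diff_add[OF le])
      moreover have "monom a \<in> gen_ideal (monom ` A)"
        using \<open>a \<in> A\<close> gen_ideal_superset by blast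
      ultimately show ?thesis
        using is_ideal_mult_left[OF is_ideal_gen_ideal] by simp
    qed
    then show "f \<in> gen_ideal (monom ` A)"
      by (subst poly_mapping_sum_single) (rule is_ideal_sum[OF is_ideal_gen_ideal])
  qed
qed

lemma exp_ideal_subset:
  "is_ideal P \<Longrightarrow> (\<And>a. a \<in> A \<Longrightarrow> monom a \<in> P) \<Longrightarrow> (exp_ideal A :: ('n, 'k::comm_ring_1) mpoly set) \<subseteq> P"
  using gen_ideal_least[of P "monom ` A"] by (auto simp: gen_ideal_monom_image)

lemma exp_ideal_neq_UNIV:
  assumes "0 \<notin> A"
  shows "(exp_ideal A :: ('n, 'k::comm_semiring_1) mpoly set) \<noteq> UNIV"
proof
  assume "(exp_ideal A :: ('n, 'k) mpoly set) = UNIV"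
  then have "0 \<in> upset A"
    using monom_in_exp_ideal_iff[of 0 A] by auto
  then obtain a where "a \<in> A" "Poly_Mapping.lookup a \<le> Poly_Mapping.lookup 0"
    by (auto simp: upset_def)
  then have "a = 0"
    by (intro poly_mapping_eqI) (simp add: le_fun_def)
  with assms \<open>a \<in> A\<close> show False by simp
qed

lemma monomial_ideal_exp_ideal: "monomial_ideal (exp_ideal A :: ('n, 'k::field) mpoly set)"
proof -
  have "monom ` A \<subseteq> (monomials :: ('n, 'k) mpoly set)"
    by (auto simp: monomials_def monom_def)
  then show ?thesis
    unfolding monomial_ideal_def by (metis gen_ideal_monom_image)
qed

lemma ideal_sum_exp_ideal_monom:
  "ideal_sum (exp_ideal A) (principal (monom c)) = (exp_ideal (insert c A) :: ('n, 'k::comm_ring_1) mpoly set)"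
  unfolding gen_ideal_monom_image[symmetric] image_insert by (rule ideal_sum_gen_ideal_principal)

lemma colon_exp_ideal_monom:
  "colon (exp_ideal A) (monom c) = (exp_ideal ((\<lambda>a. a - c) ` A) :: ('n, 'k::comm_ring_1) mpoly set)"
proof -
  have "b + c \<in> upset A \<longleftrightarrow> b \<in> upset ((\<lambda>a. a - c) ` A)" for b
    by (auto simp: upset_def le_fun_def lookup_add lookup_minus le_diff_conv)
  then show ?thesis
    by (auto simp: colon_def exp_ideal_def supported_in_def keys_mult_monom)
qed

lemma upset_insert_remove:
  "Poly_Mapping.lookup c \<le> Poly_Mapping.lookup a \<Longrightarrow> upset (insert c (A - {a})) = upset (insert c A)"
  unfolding upset_def using order_trans by blast

section \<open>Ideals generated by variables\<close>

definition total_deg :: "('n \<Rightarrow>\<^sub>0 nat) \<Rightarrow> nat" where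
  "total_deg a = (\<Sum>i\<in>Poly_Mapping.keys a. Poly_Mapping.lookup a i)"

lemma total_deg_add: "total_deg (a + b) = total_deg a + total_deg b"
  unfolding total_deg_def by (rule setsum_keys_plus_distrib) simp_all

lemma total_deg_eq_0_iff: "total_deg a = 0 \<longleftrightarrow> a = 0"
  by (auto simp: total_deg_def in_keys_iff intro: poly_mapping_eqI)

lemma total_deg_less:
  assumes "Poly_Mapping.lookup a \<le> Poly_Mapping.lookup b" and "a \<noteq> b"
  shows "total_deg a < total_deg b"
proof -
  have "b - a \<noteq> 0"
    using assms le_lookup_imp_diff_add[OF assms(1)] by force
  then have "0 < total_deg (b - a)"
    using total_deg_eq_0_iff by blast
  then show ?thesis
    using total_deg_add[of "b - a" a] le_lookup_imp_diff_add[OF assms(1)] by simp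
qed

lemma total_deg_unit_vec [simp]: "total_deg (unit_vec i) = 1"
  by (simp add: total_deg_def unit_vec_def)

text \<open>The parts of two polynomials outside \<open>D\<close> have, by \<open>keys_mult_witness\<close>,
  a product with a key outside \<open>D\<close>; the parts inside \<open>D\<close> contribute to the ideal.\<close>
lemma prime_ideal_supported_in:
  assumes up: "\<And>b c. b \<in> D \<Longrightarrow> c + b \<in> D"
    and compl_add: "\<And>b c. b \<notin> D \<Longrightarrow> c \<notin> D \<Longrightarrow> b + c \<notin> D"
    and "0 \<notin> D"
  shows "prime_ideal (supported_in D :: ('n::countable, 'k::idom) mpoly set)"
  unfolding prime_ideal_def
proof (intro conjI allI impI)
  show I: "is_ideal (supported_in D :: ('n, 'k) mpoly set)"
    by (rule is_ideal_supported_in[OF up])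
  have "(monom 0 :: ('n, 'k) mpoly) \<notin> supported_in D"
    using \<open>0 \<notin> D\<close> by simp
  then show "(supported_in D :: ('n, 'k) mpoly set) \<noteq> UNIV"
    by blast
  fix f g :: "('n, 'k) mpoly"
  assume fg: "f * g \<in> supported_in D"
  show "f \<in> supported_in D \<or> g \<in> supported_in D"
  proof (rule ccontr)
    assume "\<not> (f \<in> supported_in D \<or> g \<in> supported_in D)"
    then have "Poly_Mapping.keys (restrict_keys (- D) f) \<noteq> {}"
      and "Poly_Mapping.keys (restrict_keys (- D) g) \<noteq> {}"
      by (auto simp: supported_in_def keys_restrict_keys)
    then have "restrict_keys (- D) f \<noteq> 0" and "restrict_keys (- D) g \<noteq> 0"
      by auto
    then obtain a b where a: "a \<in> Poly_Mapping.keys (restrict_keys (- D) f)"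
      and b: "b \<in> Poly_Mapping.keys (restrict_keys (- D) g)"
      and ab: "a + b \<in> Poly_Mapping.keys (restrict_keys (- D) f * restrict_keys (- D) g)"
      using keys_mult_witness by blast
    have "restrict_keys (- D) f * restrict_keys (- D) g =
        f * g - (restrict_keys D f * g + restrict_keys (- D) f * restrict_keys D g)"
      (is "?f2 * ?g2 = _ - (?f1 * _ + _ * ?g1)")
    proof -
      have "?f2 * ?g2 = (?f1 + ?f2) * (?g1 + ?g2) - (?f1 * (?g1 + ?g2) + ?f2 * ?g1)"
        by (simp add: algebra_simps)
      then show ?thesis
        by (simp only: restrict_keys_add_compl)
    qed
    also have "\<dots> \<in> supported_in D"
    proof -
      have "restrict_keys D f * g \<in> supported_in D" "restrict_keys (- D) f * restrict_keys D g \<in> supported_in D"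
        using is_ideal_mult_left[OF I] is_ideal_mult_right[OF I] restrict_keys_in_supported_in by blast+
      then show ?thesis
        using fg is_ideal_add[OF I] is_ideal_diff[OF I] by blast
    qed
    finally have "a + b \<in> D"
      using ab by (auto simp: supported_in_def)
    with a b show False
      using compl_add by (auto simp: keys_restrict_keys)
  qed
qed

definition var_ideal :: "'n set \<Rightarrow> ('n, 'k::comm_semiring_1) mpoly set" where
  "var_ideal V = exp_ideal (unit_vec ` V)"

lemma upset_unit_vec_image: "upset (unit_vec ` V) = {b. Poly_Mapping.keys b \<inter> V \<noteq> {}}"
  by (auto simp: upset_def unit_vec_le_iff)

lemma prime_ideal_var_ideal: "prime_ideal (var_ideal V :: ('n::countable, 'k::idom) mpoly set)"
  unfolding var_ideal_def exp_ideal_def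
  by (rule prime_ideal_supported_in) (auto simp: upset_unit_vec_image in_keys_iff lookup_add disjoint_iff)

lemma monom_in_var_ideal_iff: "monom a \<in> var_ideal V \<longleftrightarrow> Poly_Mapping.keys a \<inter> V \<noteq> {}"
  by (simp add: var_ideal_def monom_in_exp_ideal_iff upset_unit_vec_image)

lemma var_ideal_subset:
  "is_ideal P \<Longrightarrow> (\<And>i. i \<in> V \<Longrightarrow> monom (unit_vec i) \<in> P) \<Longrightarrow> (var_ideal V :: ('n, 'k::comm_ring_1) mpoly set) \<subseteq> P"
  unfolding var_ideal_def by (rule exp_ideal_subset) auto

lemma prime_ideal_monom_imp_var:
  assumes P: "prime_ideal (P :: ('n, 'k::comm_ring_1) mpoly set)"
  shows "monom a \<in> P \<Longrightarrow> \<exists>i\<in>Poly_Mapping.keys a. monom (unit_vec i) \<in> P"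
proof (induction a rule: measure_induct_rule[of total_deg])
  case (less a)
  show ?case
  proof (cases "a = 0")
    case True
    with less.prems have "P = UNIV"
      using is_ideal_one_iff[OF prime_ideal_imp_is_ideal[OF P]] by (simp add: monom_zero)
    with P show ?thesis
      by (simp add: prime_ideal_def)
  next
    case False
    then obtain i where i: "i \<in> Poly_Mapping.keys a"
      by (metis all_not_in_conv keys_eq_empty)
    then have le: "Poly_Mapping.lookup (unit_vec i) \<le> Poly_Mapping.lookup a"
      by (simp add: unit_vec_le_iff)
    then have "monom a = monom (a - unit_vec i) * monom (unit_vec i)"
      by (simp add: monom_mult le_lookup_imp_diff_add)
    with less.prems P have "monom (a - unit_vec i) \<in> P \<or> monom (unit_vec i) \<in> P"
      unfolding prime_ideal_def by metis
    then show ?thesis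
    proof
      assume "monom (a - unit_vec i) \<in> P"
      moreover have "total_deg (a - unit_vec i) < total_deg a"
        using total_deg_add[of "a - unit_vec i" "unit_vec i"] le_lookup_imp_diff_add[OF le] by simp
      ultimately obtain j where "j \<in> Poly_Mapping.keys (a - unit_vec i)" "monom (unit_vec j) \<in> P"
        using less.IH by blast
      then show ?thesis
        by (auto simp: in_keys_iff lookup_minus)
    qed (use i in blast)
  qed
qed

section \<open>Monomial ideals with disjoint supports\<close>

definition transversal :: "('n \<Rightarrow>\<^sub>0 nat) set \<Rightarrow> 'n set \<Rightarrow> bool" where
  "transversal A V \<longleftrightarrow>
     V \<subseteq> (\<Union>a\<in>A. Poly_Mapping.keys a) \<and> (\<forall>a\<in>A. \<exists>i. V \<inter> Poly_Mapping.keys a = {i})"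

lemma var_ideal_in_min_primes:
  assumes V: "transversal A V"
  shows "(var_ideal V :: ('n::countable, 'k::idom) mpoly set) \<in> min_primes (exp_ideal A)"
  unfolding min_primes_def
proof (intro CollectI conjI allI impI)
  show "prime_ideal (var_ideal V :: ('n, 'k) mpoly set)"
    by (rule prime_ideal_var_ideal)
  show "(exp_ideal A :: ('n, 'k) mpoly set) \<subseteq> var_ideal V"
  proof (rule exp_ideal_subset[OF prime_ideal_imp_is_ideal[OF prime_ideal_var_ideal]])
    fix a assume "a \<in> A"
    then have "Poly_Mapping.keys a \<inter> V \<noteq> {}"
      using V unfolding transversal_def by blast
    then show "monom a \<in> var_ideal V"
      by (simp add: monom_in_var_ideal_iff)
  qed
  fix P :: "('n, 'k) mpoly set"
  assume P: "prime_ideal P \<and> exp_ideal A \<subseteq> P \<and> P \<subseteq> var_ideal V"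
  have "var_ideal V \<subseteq> P"
  proof (rule var_ideal_subset[OF prime_ideal_imp_is_ideal])
    show "prime_ideal P" using P by blast
    fix j assume "j \<in> V"
    then obtain a where a: "a \<in> A" "j \<in> Poly_Mapping.keys a"
      using V unfolding transversal_def by blast
    then obtain k where single: "V \<inter> Poly_Mapping.keys a = {k}"
      using V unfolding transversal_def by blast
    have "monom a \<in> P"
      using P monom_in_exp_ideal[OF a(1)] by blast
    then obtain i where "i \<in> Poly_Mapping.keys a" and i: "monom (unit_vec i) \<in> P"
      using prime_ideal_monom_imp_var P by blast
    moreover from i P have "i \<in> V"
      by (auto simp: monom_in_var_ideal_iff)
    ultimately have "i = j"
      using single \<open>j \<in> V\<close> a(2) by (metis IntI singletonD)
    with i show "monom (unit_vec j) \<in> P"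
      by simp
  qed
  with P show "P = var_ideal V" by blast
qed

lemma min_prime_exp_ideal_eq_var_ideal:
  assumes disj: "disjoint_family_on Poly_Mapping.keys A"
    and P: "P \<in> min_primes (exp_ideal A :: ('n::countable, 'k::idom) mpoly set)"
  shows "\<exists>V. transversal A V \<and> P = var_ideal V"
proof -
  have "prime_ideal P" and "exp_ideal A \<subseteq> P"
    using P by (auto simp: min_primes_def)
  have "\<forall>a\<in>A. \<exists>i. i \<in> Poly_Mapping.keys a \<and> monom (unit_vec i) \<in> P"
  proof
    fix a assume "a \<in> A"
    then have "monom a \<in> P"
      using \<open>exp_ideal A \<subseteq> P\<close> monom_in_exp_ideal by blast
    then show "\<exists>i. i \<in> Poly_Mapping.keys a \<and> monom (unit_vec i) \<in> P"
      using prime_ideal_monom_imp_var[OF \<open>prime_ideal P\<close>] by blast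
  qed
  then obtain s where s: "\<And>a. a \<in> A \<Longrightarrow> s a \<in> Poly_Mapping.keys a \<and> monom (unit_vec (s a)) \<in> P"
    by metis
  have "transversal A (s ` A)"
    unfolding transversal_def
  proof (intro conjI ballI)
    show "s ` A \<subseteq> (\<Union>a\<in>A. Poly_Mapping.keys a)"
      using s by blast
    fix a assume "a \<in> A"
    have "s ` A \<inter> Poly_Mapping.keys a = {s a}"
      using s \<open>a \<in> A\<close> disjoint_family_onD[OF disj] by blast
    then show "\<exists>i. s ` A \<inter> Poly_Mapping.keys a = {i}" by blast
  qed
  moreover have "var_ideal (s ` A) \<subseteq> P"
    using s \<open>prime_ideal P\<close> by (intro var_ideal_subset prime_ideal_imp_is_ideal) auto
  ultimately show ?thesis
    using P var_ideal_in_min_primes unfolding min_primes_def by blast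
qed

lemma disjoint_family_on_replace:
  "disjoint_family_on Poly_Mapping.keys A \<Longrightarrow> a \<in> A \<Longrightarrow> Poly_Mapping.keys c \<subseteq> Poly_Mapping.keys a
    \<Longrightarrow> disjoint_family_on Poly_Mapping.keys (insert c (A - {a}))"
  unfolding disjoint_family_on_def by blast

lemma transversal_replace_unit_vec:
  assumes disj: "disjoint_family_on Poly_Mapping.keys A" and "a \<in> A" "i \<in> Poly_Mapping.keys a"
    and V: "transversal (insert (unit_vec i) (A - {a})) V"
  shows "transversal A V"
proof -
  have "i \<in> V"
    using V by (auto simp: transversal_def)
  moreover have "k = i" if "k \<in> V" "k \<in> Poly_Mapping.keys a" for k
    using V that disjoint_family_onD[OF disj _ \<open>a \<in> A\<close>] by (fastforce simp: transversal_def)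
  ultimately have "V \<inter> Poly_Mapping.keys a = {i}"
    using \<open>i \<in> Poly_Mapping.keys a\<close> by blast
  then show ?thesis
    using V \<open>a \<in> A\<close> \<open>i \<in> Poly_Mapping.keys a\<close> unfolding transversal_def by auto
qed

lemma min_primes_replace_unit_vec:
  assumes "disjoint_family_on Poly_Mapping.keys A" and "a \<in> A" "i \<in> Poly_Mapping.keys a"
  shows "min_primes (exp_ideal (insert (unit_vec i) (A - {a})) :: ('n::countable, 'k::idom) mpoly set)
      \<subseteq> min_primes (exp_ideal A)"
proof
  fix P :: "('n, 'k) mpoly set"
  assume "P \<in> min_primes (exp_ideal (insert (unit_vec i) (A - {a})))"
  moreover have "disjoint_family_on Poly_Mapping.keys (insert (unit_vec i) (A - {a}))"
    using assms by (intro disjoint_family_on_replace) auto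
  ultimately obtain V where "transversal (insert (unit_vec i) (A - {a})) V" "P = var_ideal V"
    using min_prime_exp_ideal_eq_var_ideal by blast
  then show "P \<in> min_primes (exp_ideal A)"
    using var_ideal_in_min_primes transversal_replace_unit_vec assms by metis
qed

lemma upset_add_unit_vec_witness:
  assumes "b \<notin> upset A" and "b + unit_vec i \<in> upset A"
  shows "\<exists>c\<in>A. Poly_Mapping.lookup b i < Poly_Mapping.lookup c i \<and>
    (\<forall>j. j \<noteq> i \<longrightarrow> Poly_Mapping.lookup c j \<le> Poly_Mapping.lookup b j)"
proof -
  obtain c where "c \<in> A" and c: "\<And>j. Poly_Mapping.lookup c j \<le> Poly_Mapping.lookup (b + unit_vec i) j"
    using assms(2) by (auto simp: upset_def le_fun_def)
  have le: "Poly_Mapping.lookup c j \<le> Poly_Mapping.lookup b j" if "j \<noteq> i" for j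
    using c[of j] that by (simp add: lookup_add lookup_unit_vec)
  obtain j where "\<not> Poly_Mapping.lookup c j \<le> Poly_Mapping.lookup b j"
    using assms(1) \<open>c \<in> A\<close> by (auto simp: upset_def le_fun_def)
  with le have "Poly_Mapping.lookup b i < Poly_Mapping.lookup c i"
    by (cases "j = i") auto
  with \<open>c \<in> A\<close> le show ?thesis
    by blast
qed

context
  fixes A :: "('n::countable \<Rightarrow>\<^sub>0 nat) set" and f :: "('n, 'k::idom) mpoly"
  assumes disj: "disjoint_family_on Poly_Mapping.keys A"
    and keys_f: "Poly_Mapping.keys f \<inter> upset A = {}"
    and prime: "prime_ideal (colon (exp_ideal A) f)"
begin

lemma prime_colon_nonzero: "f \<noteq> 0"
  using prime is_ideal_exp_ideal[of A] by (auto simp: prime_ideal_def colon_def is_ideal_def)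

lemma exp_ideal_subset_colon: "exp_ideal A \<subseteq> colon (exp_ideal A) f"
  unfolding colon_def using is_ideal_mult_right[OF is_ideal_exp_ideal] by blast

lemma monom_unit_vec_in_colon_iff:
  "monom (unit_vec i) \<in> colon (exp_ideal A) f \<longleftrightarrow> (\<forall>b\<in>Poly_Mapping.keys f. b + unit_vec i \<in> upset A)"
  by (simp add: colon_def exp_ideal_def supported_in_def keys_mult_monom mult.commute[of "monom _"] image_subset_iff)

text \<open>Since \<open>x\<^sub>i f \<in> I\<close> but no key of \<open>f\<close> lies in the ideal, each key \<open>b\<close> of \<open>f\<close> is
  pushed into the ideal by raising its \<open>i\<close>-th exponent alone; by disjointness the generator
  responsible is the one containing \<open>x\<^sub>i\<close>.\<close>
lemma colon_var_generator:
  assumes "monom (unit_vec i) \<in> colon (exp_ideal A) f" and "b \<in> Poly_Mapping.keys f"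
    and "a \<in> A" "i \<in> Poly_Mapping.keys a"
  shows "Poly_Mapping.lookup b i < Poly_Mapping.lookup a i"
    and "j \<noteq> i \<Longrightarrow> Poly_Mapping.lookup a j \<le> Poly_Mapping.lookup b j"
proof -
  have "b \<notin> upset A"
    using assms(2) keys_f by blast
  moreover have "b + unit_vec i \<in> upset A"
    using assms(1,2) monom_unit_vec_in_colon_iff by blast
  ultimately obtain c where c: "c \<in> A" "Poly_Mapping.lookup b i < Poly_Mapping.lookup c i"
    "\<And>j. j \<noteq> i \<Longrightarrow> Poly_Mapping.lookup c j \<le> Poly_Mapping.lookup b j"
    by (meson upset_add_unit_vec_witness)
  then have "i \<in> Poly_Mapping.keys c"
    by (simp add: in_keys_iff)
  then have "c = a"
    using disjoint_family_onD[OF disj \<open>c \<in> A\<close> assms(3)] assms(4) by blast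
  with c show "Poly_Mapping.lookup b i < Poly_Mapping.lookup a i"
    and "j \<noteq> i \<Longrightarrow> Poly_Mapping.lookup a j \<le> Poly_Mapping.lookup b j"
    by auto
qed

lemma colon_transversal: "transversal A {i. monom (unit_vec i) \<in> colon (exp_ideal A) f}"
  (is "transversal A ?W")
  unfolding transversal_def
proof (intro conjI ballI)
  obtain b0 where b0: "b0 \<in> Poly_Mapping.keys f"
    using prime_colon_nonzero by (metis all_not_in_conv keys_eq_empty)
  show "?W \<subseteq> (\<Union>a\<in>A. Poly_Mapping.keys a)"
  proof
    fix i assume "i \<in> ?W"
    with b0 have "b0 + unit_vec i \<in> upset A"
      using monom_unit_vec_in_colon_iff by blast
    moreover have "b0 \<notin> upset A"
      using b0 keys_f by blast
    ultimately obtain c where "c \<in> A" "Poly_Mapping.lookup b0 i < Poly_Mapping.lookup c i"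
      by (meson upset_add_unit_vec_witness)
    then have "i \<in> Poly_Mapping.keys c"
      by (simp add: in_keys_iff)
    with \<open>c \<in> A\<close> show "i \<in> (\<Union>a\<in>A. Poly_Mapping.keys a)"
      by blast
  qed
  fix a assume "a \<in> A"
  then have "monom a \<in> colon (exp_ideal A) f"
    using exp_ideal_subset_colon monom_in_exp_ideal by blast
  then obtain i where i: "i \<in> Poly_Mapping.keys a" "i \<in> ?W"
    using prime_ideal_monom_imp_var[OF prime] by blast
  have "j = i" if "j \<in> ?W" "j \<in> Poly_Mapping.keys a" for j
  proof (rule ccontr)
    assume "j \<noteq> i"
    then have "Poly_Mapping.lookup a j \<le> Poly_Mapping.lookup b0 j"
      using colon_var_generator(2)[of i b0 a j] i b0 \<open>a \<in> A\<close> by blast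
    moreover have "Poly_Mapping.lookup b0 j < Poly_Mapping.lookup a j"
      using colon_var_generator(1)[of j b0 a] that b0 \<open>a \<in> A\<close> by blast
    ultimately show False
      by simp
  qed
  with i have "?W \<inter> Poly_Mapping.keys a = {i}"
    by blast
  then show "\<exists>i. ?W \<inter> Poly_Mapping.keys a = {i}"
    by blast
qed

lemma colon_subset_var_ideal:
  "colon (exp_ideal A) f \<subseteq> var_ideal {i. monom (unit_vec i) \<in> colon (exp_ideal A) f}"
  (is "?P \<subseteq> var_ideal ?W")
proof
  fix g assume "g \<in> ?P"
  define E where "E = upset (unit_vec ` ?W)"
  have "restrict_keys E g \<in> var_ideal ?W"
    unfolding var_ideal_def exp_ideal_def E_def by (rule restrict_keys_in_supported_in)
  moreover have "var_ideal ?W \<subseteq> ?P"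
    by (rule var_ideal_subset[OF prime_ideal_imp_is_ideal[OF prime]]) simp
  ultimately have "g - restrict_keys E g \<in> ?P"
    using \<open>g \<in> ?P\<close> is_ideal_diff[OF prime_ideal_imp_is_ideal[OF prime]] by blast
  moreover have "g - restrict_keys E g = restrict_keys (- E) g"
    by (metis restrict_keys_add_compl add_diff_cancel_left')
  ultimately have g': "restrict_keys (- E) g * f \<in> exp_ideal A"
    by (simp add: colon_def)
  have "restrict_keys (- E) g = 0"
    \<comment> \<open>a generator below a key \<open>a + b\<close> of the product contains some \<open>x\<^sub>i\<close>, \<open>i \<in> ?W\<close>, while \<open>a\<^sub>i = 0\<close>\<close>
  proof (rule ccontr)
    assume "restrict_keys (- E) g \<noteq> 0"
    then obtain a b where a: "a \<in> Poly_Mapping.keys (restrict_keys (- E) g)"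
      and b: "b \<in> Poly_Mapping.keys f" and ab: "a + b \<in> Poly_Mapping.keys (restrict_keys (- E) g * f)"
      using keys_mult_witness prime_colon_nonzero by blast
    from ab g' obtain c where "c \<in> A" and c: "Poly_Mapping.lookup c \<le> Poly_Mapping.lookup (a + b)"
      by (auto simp: exp_ideal_def supported_in_def upset_def)
    then obtain i where "i \<in> ?W" "i \<in> Poly_Mapping.keys c"
      using colon_transversal unfolding transversal_def by blast
    then have "Poly_Mapping.lookup b i < Poly_Mapping.lookup c i"
      using colon_var_generator(1) b \<open>c \<in> A\<close> by blast
    moreover have "Poly_Mapping.lookup a i = 0"
      using a \<open>i \<in> ?W\<close> by (auto simp: keys_restrict_keys E_def upset_unit_vec_image in_keys_iff)
    ultimately show False
      using c by (auto simp: le_fun_def lookup_add dest: spec[of _ i])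
  qed
  then show "g \<in> var_ideal ?W"
    using \<open>restrict_keys E g \<in> var_ideal ?W\<close> restrict_keys_add_compl[of E g] by simp
qed

lemma prime_colon_in_min_primes: "colon (exp_ideal A) f \<in> min_primes (exp_ideal A)"
proof -
  have "var_ideal {i. monom (unit_vec i) \<in> colon (exp_ideal A) f} \<subseteq> colon (exp_ideal A) f"
    by (rule var_ideal_subset[OF prime_ideal_imp_is_ideal[OF prime]]) simp
  with colon_subset_var_ideal
  have "colon (exp_ideal A) f = var_ideal {i. monom (unit_vec i) \<in> colon (exp_ideal A) f}"
    by (rule subset_antisym)
  then show ?thesis
    by (subst (1) \<open>colon (exp_ideal A) f = _\<close>) (rule var_ideal_in_min_primes[OF colon_transversal])
qed

end

lemma no_embedded_primes_exp_ideal: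
  assumes "disjoint_family_on Poly_Mapping.keys A"
  shows "no_embedded_primes (exp_ideal A :: ('n::countable, 'k::idom) mpoly set)"
  unfolding no_embedded_primes_def
proof
  fix P :: "('n, 'k) mpoly set"
  assume "P \<in> ass_primes (exp_ideal A)"
  then obtain f where "prime_ideal P" and P: "P = colon (exp_ideal A) f"
    by (auto simp: ass_primes_def)
  have "restrict_keys (upset A) f \<in> exp_ideal A"
    unfolding exp_ideal_def by (rule restrict_keys_in_supported_in)
  then have "P = colon (exp_ideal A) (restrict_keys (- upset A) f)"
    using P colon_add_member[OF is_ideal_exp_ideal] restrict_keys_add_compl[of "upset A" f]
    by (metis add.commute)
  moreover have "Poly_Mapping.keys (restrict_keys (- upset A) f) \<inter> upset A = {}"
    by (auto simp: keys_restrict_keys)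
  ultimately show "P \<in> min_primes (exp_ideal A)"
    using prime_colon_in_min_primes[OF assms] \<open>prime_ideal P\<close> by simp
qed

section \<open>Cleanness\<close>

lemma ideal_sum_exp_ideal_unit_vec:
  "i \<in> Poly_Mapping.keys a \<Longrightarrow> ideal_sum (exp_ideal A) (principal (monom (unit_vec i)))
    = (exp_ideal (insert (unit_vec i) (A - {a})) :: ('n, 'k::comm_ring_1) mpoly set)"
  unfolding ideal_sum_exp_ideal_monom by (simp add: exp_ideal_def upset_insert_remove unit_vec_le_iff)

lemma colon_exp_ideal_unit_vec:
  assumes disj: "disjoint_family_on Poly_Mapping.keys A" and "a \<in> A" "i \<in> Poly_Mapping.keys a"
  shows "colon (exp_ideal A) (monom (unit_vec i))
    = (exp_ideal (insert (a - unit_vec i) (A - {a})) :: ('n, 'k::comm_ring_1) mpoly set)"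
proof -
  have "c - unit_vec i = c" if "c \<in> A - {a}" for c
  proof -
    have "i \<notin> Poly_Mapping.keys c"
      using that disjoint_family_onD[OF disj _ \<open>a \<in> A\<close>] \<open>i \<in> Poly_Mapping.keys a\<close> by blast
    then show ?thesis
      by (intro poly_mapping_eqI) (auto simp: lookup_minus lookup_unit_vec in_keys_iff)
  qed
  then have "(\<lambda>c. c - unit_vec i) ` A = insert (a - unit_vec i) (A - {a})"
    using \<open>a \<in> A\<close> by force
  then show ?thesis
    by (simp add: colon_exp_ideal_monom)
qed

lemma monom_unit_vec_notin_exp_ideal:
  assumes disj: "disjoint_family_on Poly_Mapping.keys A" and "0 \<notin> A"
    and "a \<in> A" "i \<in> Poly_Mapping.keys a" "a \<noteq> unit_vec i"
  shows "monom (unit_vec i) \<notin> exp_ideal A"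
proof
  assume "monom (unit_vec i) \<in> exp_ideal A"
  then obtain c where "c \<in> A" and c: "Poly_Mapping.lookup c \<le> Poly_Mapping.lookup (unit_vec i)"
    by (auto simp: monom_in_exp_ideal_iff upset_def)
  have "c \<noteq> 0"
    using \<open>c \<in> A\<close> \<open>0 \<notin> A\<close> by blast
  then obtain k where k: "Poly_Mapping.lookup c k \<noteq> 0"
    by (metis lookup_zero poly_mapping_eqI)
  then have "k = i" and "Poly_Mapping.lookup c i = 1"
    using c le_funD[OF c, of k] le_funD[OF c, of i] by (auto simp: lookup_unit_vec split: if_splits)
  then have "c = unit_vec i"
    using c by (intro poly_mapping_eqI) (auto simp: le_fun_def lookup_unit_vec split: if_splits)
  then have "c = a"
    using disjoint_family_onD[OF disj \<open>c \<in> A\<close> \<open>a \<in> A\<close>] \<open>i \<in> Poly_Mapping.keys a\<close> by auto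
  with \<open>c = unit_vec i\<close> \<open>a \<noteq> unit_vec i\<close> show False
    by simp
qed

lemma cleaner_monomial_unit_vec:
  assumes disj: "disjoint_family_on Poly_Mapping.keys A" and "0 \<notin> A"
    and "a \<in> A" "i \<in> Poly_Mapping.keys a" "a \<noteq> unit_vec i"
  shows "cleaner_monomial (exp_ideal A :: ('n::countable, 'k::field) mpoly set) (monom (unit_vec i))"
  unfolding cleaner_monomial_def
proof (intro conjI)
  show "monom (unit_vec i) \<in> (monomials :: ('n, 'k) mpoly set)"
    by (simp add: monomials_def monom_def)
  show "(monom (unit_vec i) :: ('n, 'k) mpoly) \<noteq> 1"
    by (simp add: monom_zero[symmetric] monom_eq_iff)
  show "monom (unit_vec i) \<notin> (exp_ideal A :: ('n, 'k) mpoly set)"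
    by (rule monom_unit_vec_notin_exp_ideal[OF assms])
  show "min_primes (ideal_sum (exp_ideal A :: ('n, 'k) mpoly set) (principal (monom (unit_vec i))))
      \<subseteq> min_primes (exp_ideal A)"
    unfolding ideal_sum_exp_ideal_unit_vec[OF \<open>i \<in> _\<close>]
    by (rule min_primes_replace_unit_vec[OF disj \<open>a \<in> A\<close> \<open>i \<in> _\<close>])
qed

lemma sum_insert_remove_le:
  fixes f :: "'a \<Rightarrow> nat"
  assumes "finite A" "a \<in> A"
  shows "(\<Sum>c\<in>insert x (A - {a}). f c) + f a \<le> f x + (\<Sum>c\<in>A. f c)"
  using assms by (simp add: sum.insert_if sum.remove)

lemma k_clean_exp_ideal:
  assumes "finite A" "0 \<notin> A" "disjoint_family_on Poly_Mapping.keys A"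
  shows "k_clean 0 (exp_ideal A :: ('n::countable, 'k::field) mpoly set)"
  using assms
proof (induction A rule: measure_induct_rule[of "\<lambda>A. \<Sum>a\<in>A. total_deg a"])
  case (less A)
  note fin = \<open>finite A\<close> and nz = \<open>0 \<notin> A\<close> and disj = \<open>disjoint_family_on Poly_Mapping.keys A\<close>
  show ?case
  proof (cases "A \<subseteq> range unit_vec")
    case True
    then have "A = unit_vec ` {i. unit_vec i \<in> A}"
      by auto
    then have "prime_ideal (exp_ideal A :: ('n, 'k) mpoly set)"
      using prime_ideal_var_ideal unfolding var_ideal_def by metis
    then show ?thesis
      by (intro k_clean.prime monomial_ideal_exp_ideal exp_ideal_neq_UNIV nz)
  next
    case False
    then obtain a where "a \<in> A" and a_not_var: "a \<notin> range unit_vec"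
      by blast
    then obtain i where i: "i \<in> Poly_Mapping.keys a"
      using nz by (metis all_not_in_conv keys_eq_empty)
    then have le: "Poly_Mapping.lookup (unit_vec i) \<le> Poly_Mapping.lookup a"
      by (simp add: unit_vec_le_iff)
    have "a - unit_vec i \<noteq> 0"
      using le_lookup_imp_diff_add[OF le] a_not_var by (metis add_0 rangeI)
    then have "total_deg (a - unit_vec i) \<noteq> 0"
      by (simp add: total_deg_eq_0_iff)
    then have deg: "total_deg (unit_vec i) < total_deg a" "total_deg (a - unit_vec i) < total_deg a"
      using total_deg_add[of "a - unit_vec i" "unit_vec i"] le_lookup_imp_diff_add[OF le] by simp_all
    have keys_diff: "Poly_Mapping.keys (a - unit_vec i) \<subseteq> Poly_Mapping.keys a"
      by (auto simp: in_keys_iff lookup_minus)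
    define A1 where "A1 = insert (unit_vec i) (A - {a})"
    define A2 where "A2 = insert (a - unit_vec i) (A - {a})"
    have IH1: "k_clean 0 (exp_ideal A1 :: ('n, 'k) mpoly set)"
    proof (rule less.IH)
      show "(\<Sum>c\<in>A1. total_deg c) < (\<Sum>c\<in>A. total_deg c)"
        using sum_insert_remove_le[OF fin \<open>a \<in> A\<close>, of total_deg "unit_vec i"] deg unfolding A1_def by simp
      show "disjoint_family_on Poly_Mapping.keys A1"
        unfolding A1_def using i by (intro disjoint_family_on_replace[OF disj \<open>a \<in> A\<close>]) simp
    qed (use fin nz in \<open>auto simp: A1_def\<close>)
    have IH2: "k_clean 0 (exp_ideal A2 :: ('n, 'k) mpoly set)"
    proof (rule less.IH)
      show "(\<Sum>c\<in>A2. total_deg c) < (\<Sum>c\<in>A. total_deg c)"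
        using sum_insert_remove_le[OF fin \<open>a \<in> A\<close>, of total_deg "a - unit_vec i"] deg unfolding A2_def by simp
      show "disjoint_family_on Poly_Mapping.keys A2"
        unfolding A2_def by (rule disjoint_family_on_replace[OF disj \<open>a \<in> A\<close> keys_diff])
    qed (use fin nz \<open>a - unit_vec i \<noteq> 0\<close> in \<open>auto simp: A2_def\<close>)
    have cleaner: "cleaner_monomial (exp_ideal A :: ('n, 'k) mpoly set) (monom (unit_vec i))"
      using a_not_var by (intro cleaner_monomial_unit_vec[OF disj nz \<open>a \<in> A\<close> i]) auto
    have card: "card (mon_supp (monom (unit_vec i) :: ('n, 'k) mpoly)) \<le> 0 + 1"
      by (simp add: mon_supp_def)
    have sum: "ideal_sum (exp_ideal A) (principal (monom (unit_vec i))) = (exp_ideal A1 :: ('n, 'k) mpoly set)"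
      unfolding A1_def by (rule ideal_sum_exp_ideal_unit_vec[OF i])
    have colon: "colon (exp_ideal A) (monom (unit_vec i)) = (exp_ideal A2 :: ('n, 'k) mpoly set)"
      unfolding A2_def by (rule colon_exp_ideal_unit_vec[OF disj \<open>a \<in> A\<close> i])
    show ?thesis
      by (rule k_clean.step[OF monomial_ideal_exp_ideal exp_ideal_neq_UNIV[OF nz]
            no_embedded_primes_exp_ideal[OF disj] cleaner card]) (simp_all add: sum colon IH1 IH2)
  qed
qed

section \<open>Complete intersections\<close>

lemma monomial_ideal_imp_exp_ideal:
  assumes "monomial_ideal (I :: ('n, 'k::field) mpoly set)"
  obtains B where "I = exp_ideal B"
proof -
  obtain G where "G \<subseteq> monomials" "I = gen_ideal G"
    using assms unfolding monomial_ideal_def by blast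
  then have "I = gen_ideal (monom ` {a. monom a \<in> G})"
    by (auto simp: monomials_def monom_def intro!: arg_cong[of _ _ gen_ideal])
  then show ?thesis
    using that by (simp add: gen_ideal_monom_image)
qed

definition minimal_exps :: "('n \<Rightarrow>\<^sub>0 nat) set \<Rightarrow> ('n \<Rightarrow>\<^sub>0 nat) set" where
  "minimal_exps B = {b \<in> upset B. \<forall>c\<in>upset B. Poly_Mapping.lookup c \<le> Poly_Mapping.lookup b \<longrightarrow> c = b}"

lemma minimal_exps_below: "b \<in> upset B \<Longrightarrow> \<exists>m\<in>minimal_exps B. Poly_Mapping.lookup m \<le> Poly_Mapping.lookup b"
proof (induction b rule: measure_induct_rule[of total_deg])
  case (less b)
  show ?case
  proof (cases "b \<in> minimal_exps B")
    case False
    then obtain c where c: "c \<in> upset B" "Poly_Mapping.lookup c \<le> Poly_Mapping.lookup b" "c \<noteq> b"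
      using less.prems unfolding minimal_exps_def by blast
    then obtain m where "m \<in> minimal_exps B" "Poly_Mapping.lookup m \<le> Poly_Mapping.lookup c"
      using less.IH total_deg_less by blast
    with c(2) show ?thesis
      using order_trans by blast
  qed auto
qed

lemma upset_minimal_exps: "upset (minimal_exps B) = upset B"
proof
  show "upset (minimal_exps B) \<subseteq> upset B"
    unfolding upset_def minimal_exps_def using order_trans by blast
  show "upset B \<subseteq> upset (minimal_exps B)"
    using minimal_exps_below unfolding upset_def by (blast intro: order_trans)
qed

lemma monom_dvd_monom_iff:
  "(monom c :: ('n, 'k::comm_semiring_1) mpoly) dvd monom b \<longleftrightarrow> Poly_Mapping.lookup c \<le> Poly_Mapping.lookup b"
proof
  assume "(monom c :: ('n, 'k) mpoly) dvd monom b"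
  then obtain h :: "('n, 'k) mpoly" where "monom b = monom c * h"
    by (auto simp: dvd_def)
  then have "{b} = (\<lambda>x. x + c) ` Poly_Mapping.keys h"
    by (metis keys_monom keys_mult_monom mult.commute)
  then obtain x where "b = x + c"
    by blast
  then show "Poly_Mapping.lookup c \<le> Poly_Mapping.lookup b"
    by (simp add: le_fun_def lookup_add)
next
  assume "Poly_Mapping.lookup c \<le> Poly_Mapping.lookup b"
  then have "(monom b :: ('n, 'k) mpoly) = monom (b - c) * monom c"
    by (simp add: monom_mult le_lookup_imp_diff_add)
  then show "(monom c :: ('n, 'k) mpoly) dvd monom b"
    by simp
qed

lemma monom_in_min_mon_gens_exp_ideal_iff:
  "monom b \<in> min_mon_gens (exp_ideal B :: ('n, 'k::field) mpoly set) \<longleftrightarrow> b \<in> minimal_exps B"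
proof -
  have mon: "monomials = range (monom :: _ \<Rightarrow> ('n, 'k) mpoly)"
    by (simp add: monomials_def monom_def[abs_def])
  have ball_monom: "(\<forall>v\<in>X \<inter> range monom. P v) \<longleftrightarrow> (\<forall>c. monom c \<in> X \<longrightarrow> P (monom c))" for X P
    by blast
  show ?thesis
    unfolding min_mon_gens_def minimal_exps_def mon
    by (auto simp: ball_monom monom_in_exp_ideal_iff monom_dvd_monom_iff monom_eq_iff)
qed

lemma min_mon_gens_exp_ideal:
  "min_mon_gens (exp_ideal B :: ('n, 'k::field) mpoly set) = monom ` minimal_exps B"
proof -
  have "min_mon_gens (exp_ideal B :: ('n, 'k) mpoly set) \<subseteq> range monom"
    by (auto simp: min_mon_gens_def monomials_def monom_def)
  then show ?thesis
    using monom_in_min_mon_gens_exp_ideal_iff by blast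
qed

text \<open>If two generators \<open>x\<^sup>a\<close> (earlier) and \<open>x\<^sup>b\<close> (later) share a variable, then
  \<open>x\<^sup>a\<^sup>-\<^sup>b\<close> multiplies \<open>x\<^sup>b\<close> into the ideal of the earlier generators but is itself
  not in it, so \<open>x\<^sup>b\<close> is a zero divisor modulo that ideal.\<close>
lemma regular_sequence_monom_keys_disjoint:
  fixes fs :: "('n, 'k::comm_ring_1) mpoly list"
  assumes reg: "regular_sequence fs" and set_fs: "set fs = monom ` A"
    and antichain: "\<And>a d. a \<in> A \<Longrightarrow> d \<in> A \<Longrightarrow> Poly_Mapping.lookup d \<le> Poly_Mapping.lookup a \<Longrightarrow> d = a"
    and "p < q" "q < length fs" and p: "fs ! p = monom a" and q: "fs ! q = monom b"
  shows "Poly_Mapping.keys a \<inter> Poly_Mapping.keys b = {}"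
proof (rule ccontr)
  assume "Poly_Mapping.keys a \<inter> Poly_Mapping.keys b \<noteq> {}"
  then obtain i where "i \<in> Poly_Mapping.keys a" "i \<in> Poly_Mapping.keys b"
    by blast
  define A0 where "A0 = {d \<in> A. monom d \<in> set (take q fs)}"
  have take_q: "gen_ideal (set (take q fs)) = (exp_ideal A0 :: ('n, 'k) mpoly set)"
  proof -
    have "set (take q fs) \<subseteq> monom ` A0"
    proof
      fix x assume x: "x \<in> set (take q fs)"
      then obtain d where "d \<in> A" "x = monom d"
        using set_take_subset[of q fs] set_fs by blast
      with x show "x \<in> monom ` A0"
        unfolding A0_def by blast
    qed
    then have "set (take q fs) = monom ` A0"
      unfolding A0_def by blast
    then show ?thesis
      by (simp add: gen_ideal_monom_image)
  qed
  have "fs ! p \<in> set (take q fs)"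
    using \<open>p < q\<close> \<open>q < length fs\<close> nth_mem[of p "take q fs"] by simp
  moreover have "(monom a :: ('n, 'k) mpoly) \<in> monom ` A"
    using p \<open>p < q\<close> \<open>q < length fs\<close> set_fs nth_mem[of p fs] by simp
  then have "a \<in> A"
    by (auto simp: monom_eq_iff)
  ultimately have "a \<in> A0"
    using p unfolding A0_def by simp
  have "(monom (a - b) :: ('n, 'k) mpoly) * fs ! q = monom ((a - b) + b)"
    by (simp add: q monom_mult)
  also have "\<dots> \<in> exp_ideal A0"
  proof -
    have "Poly_Mapping.lookup a \<le> Poly_Mapping.lookup ((a - b) + b)"
      by (auto simp: le_fun_def lookup_add lookup_minus)
    with \<open>a \<in> A0\<close> show ?thesis
      by (auto simp: monom_in_exp_ideal_iff upset_def)
  qed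
  finally have "monom (a - b) * fs ! q \<in> gen_ideal (set (take q fs))"
    by (simp add: take_q)
  then have "(monom (a - b) :: ('n, 'k) mpoly) \<in> gen_ideal (set (take q fs))"
    using reg \<open>q < length fs\<close> unfolding regular_sequence_def by blast
  then have "(monom (a - b) :: ('n, 'k) mpoly) \<in> exp_ideal A0"
    by (simp add: take_q)
  then obtain d where "d \<in> A0" and d: "Poly_Mapping.lookup d \<le> Poly_Mapping.lookup (a - b)"
    by (auto simp: monom_in_exp_ideal_iff upset_def)
  moreover have "Poly_Mapping.lookup (a - b) \<le> Poly_Mapping.lookup a"
    by (simp add: le_fun_def lookup_minus)
  ultimately have "d = a"
    using antichain[OF \<open>a \<in> A\<close>] \<open>d \<in> A0\<close> order_trans[OF d] unfolding A0_def by blast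
  with d have "Poly_Mapping.lookup a i \<le> Poly_Mapping.lookup a i - Poly_Mapping.lookup b i"
    by (simp add: le_fun_def lookup_minus)
  with \<open>i \<in> Poly_Mapping.keys a\<close> \<open>i \<in> Poly_Mapping.keys b\<close> show False
    by (simp add: in_keys_iff)
qed

lemma regular_sequence_imp_disjoint_family:
  fixes fs :: "('n, 'k::comm_ring_1) mpoly list"
  assumes reg: "regular_sequence fs" and set_fs: "set fs = monom ` A"
    and antichain: "\<And>a d. a \<in> A \<Longrightarrow> d \<in> A \<Longrightarrow> Poly_Mapping.lookup d \<le> Poly_Mapping.lookup a \<Longrightarrow> d = a"
  shows "disjoint_family_on Poly_Mapping.keys A"
  unfolding disjoint_family_on_def
proof (intro ballI impI)
  fix a b assume "a \<in> A" "b \<in> A" "a \<noteq> b"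
  then obtain p q where pq: "p < length fs" "fs ! p = monom a" "q < length fs" "fs ! q = monom b"
    using set_fs by (metis imageI in_set_conv_nth)
  with \<open>a \<noteq> b\<close> have "p < q \<or> q < p"
    by (metis monom_eq_iff linorder_neqE_nat)
  then show "Poly_Mapping.keys a \<inter> Poly_Mapping.keys b = {}"
    using regular_sequence_monom_keys_disjoint[OF reg set_fs antichain] pq by blast
qed

theorem theorem5p2:
  fixes I :: "('n::finite, 'k::field) mpoly set"
  assumes "monomial_ideal I"
    and "I \<noteq> UNIV"
    and "I \<noteq> {0}"
    and "complete_intersection I"
  shows "k_clean 0 I"
proof -
  obtain B where "I = exp_ideal B"
    using monomial_ideal_imp_exp_ideal[OF assms(1)] .
  define A where "A = minimal_exps B"
  have I: "I = exp_ideal A"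
    by (simp add: \<open>I = exp_ideal B\<close> A_def exp_ideal_def upset_minimal_exps)
  obtain fs :: "('n, 'k) mpoly list" where reg: "regular_sequence fs" and set_fs: "set fs = monom ` A"
    using assms(4) by (auto simp: complete_intersection_def \<open>I = exp_ideal B\<close> min_mon_gens_exp_ideal A_def)
  have "finite A"
    using set_fs by (metis List.finite_set finite_imageD inj_onI monom_eq_iff)
  moreover have "0 \<notin> A"
    using assms(2) is_ideal_one_iff[OF is_ideal_exp_ideal] monom_in_exp_ideal[of 0 A]
    by (auto simp: I monom_zero)
  moreover have "disjoint_family_on Poly_Mapping.keys A"
    by (rule regular_sequence_imp_disjoint_family[OF reg set_fs]) (auto simp: A_def minimal_exps_def)
  ultimately show ?thesis
    unfolding I by (rule k_clean_exp_ideal)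
qed

end
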